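(* Let $k$ be a positive integer and $\underline{\zeta}\in\mathbb{R}^k$ arbitrary. Then \[ \widehat{\lambda}_{k,1}(\underline{\zeta})=\frac{1}{k}\quad\Longleftrightarrow\quad \lambda_{k,2}(\underline{\zeta})\geq\lambda_{k,3}(\underline{\zeta})\geq\cdots\geq\lambda_{k,k+1}(\underline{\zeta})=\frac{1}{k}. \]
   Context: For $\underline{\zeta}=(\zeta_1,\ldots,\zeta_k)\in\mathbb{R}^k$ and $1\leq j\leq k+1$, $\lambda_{k,j}(\underline{\zeta})$ (resp. $\widehat{\lambda}_{k,j}(\underline{\zeta})$) is the supremum of all $\eta\in\mathbb{R}$ such that the system $|x|\leq X$, $\max_{1\leq i\leq k}|\zeta_i x-y_i|\leq X^{-\eta}$ has at least $j$ linearly independent solutions $(x,y_1,\ldots,y_k)\in\mathbb{Z}^{k+1}$ for arbitrarily large real $X$ (resp. for all sufficiently large real $X$). *)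

theory Defs
  imports "HOL-Analysis.Analysis"
begin

text \<open>Vectors in Z^(k+1) are represented as functions nat => int, where
  component 0 is x and component i (1 <= i <= k) is y_i.
  zeta :: nat => real uses components 1..k.\<close>

definition lin_indep_int :: "nat \<Rightarrow> nat \<Rightarrow> (nat \<Rightarrow> nat \<Rightarrow> int) \<Rightarrow> bool" where
  "lin_indep_int k j v \<longleftrightarrow>
     (\<forall>c :: nat \<Rightarrow> real.
        (\<forall>i\<le>k. (\<Sum>l<j. c l * of_int (v l i)) = 0) \<longrightarrow> (\<forall>l<j. c l = 0))"

definition has_indep_sols :: "nat \<Rightarrow> nat \<Rightarrow> (nat \<Rightarrow> real) \<Rightarrow> real \<Rightarrow> real \<Rightarrow> bool" where
  "has_indep_sols k j zeta eta X \<longleftrightarrow>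
     (\<exists>v :: nat \<Rightarrow> nat \<Rightarrow> int. lin_indep_int k j v \<and>
        (\<forall>l<j. \<bar>real_of_int (v l 0)\<bar> \<le> X \<and>
               (\<forall>i\<in>{1..k}. \<bar>zeta i * of_int (v l 0) - of_int (v l i)\<bar> \<le> X powr (-eta))))"

definition lambda_exp :: "nat \<Rightarrow> nat \<Rightarrow> (nat \<Rightarrow> real) \<Rightarrow> ereal" where
  "lambda_exp k j zeta =
     Sup {ereal eta | eta. \<forall>X0. \<exists>X\<ge>X0. has_indep_sols k j zeta eta X}"

definition hat_lambda_exp :: "nat \<Rightarrow> nat \<Rightarrow> (nat \<Rightarrow> real) \<Rightarrow> ereal" where
  "hat_lambda_exp k j zeta =
     Sup {ereal eta | eta. \<exists>X0. \<forall>X\<ge>X0. has_indep_sols k j zeta eta X}"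

end

theory Submission
  imports Defs "Jordan_Normal_Form.Determinant" "HOL-Real_Asymp.Real_Asymp"
begin

text \<open>Write \<open>L\<^sub>0(u) = x\<close> and \<open>L\<^sub>i(u) = \<zeta>\<^sub>i x - y\<^sub>i\<close>. Dirichlet's box principle gives
  hat-lambda(k,1) \<open>\<ge> 1/k\<close>, and lambda(k,j) is decreasing in \<open>j\<close>. For \<open>k+1\<close> independent integer
  vectors the determinant of \<open>(L\<^sub>c(u\<^sub>r))\<close> is, up to sign, a nonzero integer, so it is at least \<open>1\<close>
  in absolute value, while the Leibniz expansion bounds it by the sizes of the forms; hence
  lambda(k,k+1) \<open>\<le> 1/k\<close>. If hat-lambda(k,1) \<open>> \<theta> > 1/k\<close>, a very good solution at scale \<open>X\<^sup>a\<close>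
  can be exchanged into any family of \<open>k+1\<close> independent solutions at scale \<open>X\<close>, and the same
  bound forces lambda(k,k+1) \<open>\<le> 1/(k\<theta>+k-1) < 1/k\<close>. Conversely, if hat-lambda(k,1) \<open>= 1/k\<close>,
  then for every \<open>\<theta> > 1/k\<close> there are arbitrarily large \<open>Y\<close> admitting no solution of quality
  \<open>\<theta>\<close>. Were the solutions at a suitable scale \<open>N\<close> contained in a hyperplane, the box principle
  in a box adapted to that hyperplane would produce such a solution; so they span, and
  lambda(k,k+1) \<open>\<ge> 1/k\<close>.\<close>

section \<open>Linear independence of integer vectors\<close>

lemma lin_indep_int_mono:
  assumes indep: "lin_indep_int k j' v" and "j \<le> j'"
  shows "lin_indep_int k j v"
  unfolding lin_indep_int_def
proof (intro allI impI)
  fix c :: "nat \<Rightarrow> real" and l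
  assume c: "\<forall>i\<le>k. (\<Sum>l<j. c l * of_int (v l i)) = 0" and "l < j"
  define c' where "c' l = (if l < j then c l else 0)" for l
  have "(\<Sum>l<j'. c' l * of_int (v l i)) = (\<Sum>l<j. c l * of_int (v l i))" for i
  proof -
    have "(\<Sum>l<j'. c' l * of_int (v l i)) = (\<Sum>l<j. c' l * of_int (v l i))"
      using \<open>j \<le> j'\<close> by (intro sum.mono_neutral_right) (auto simp: c'_def)
    also have "\<dots> = (\<Sum>l<j. c l * of_int (v l i))" by (simp add: c'_def)
    finally show ?thesis .
  qed
  then have "\<forall>l<j'. c' l = 0" using c indep unfolding lin_indep_int_def by simp
  then show "c l = 0" using \<open>l < j\<close> \<open>j \<le> j'\<close> by (auto simp: c'_def dest!: spec[of _ l])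
qed

lemma lin_indep_int_1_iff: "lin_indep_int k 1 v \<longleftrightarrow> (\<exists>i\<le>k. v 0 i \<noteq> 0)"
proof
  assume "lin_indep_int k 1 v"
  then show "\<exists>i\<le>k. v 0 i \<noteq> 0"
    using spec[of _ "\<lambda>_. 1"] unfolding lin_indep_int_def by fastforce
qed (auto simp: lin_indep_int_def)

lemma lin_indep_int_coeffs_unique:
  fixes a b :: "nat \<Rightarrow> real"
  assumes "lin_indep_int k j v"
    and "\<forall>i\<le>k. (\<Sum>l<j. a l * of_int (v l i)) = (\<Sum>l<j. b l * of_int (v l i))"
  shows "\<forall>l<j. a l = b l"
proof -
  have "\<forall>i\<le>k. (\<Sum>l<j. (a l - b l) * of_int (v l i)) = 0"
    using assms(2) by (simp add: left_diff_distrib sum_subtractf)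
  then show ?thesis
    using spec[OF assms(1)[unfolded lin_indep_int_def], of "\<lambda>l. a l - b l"] by simp
qed

lemma dependent_append_imp_combination:
  assumes indep: "lin_indep_int k r v" and dep: "\<not> lin_indep_int k (r+1) (v(r:=u))"
  shows "\<exists>\<alpha>. \<forall>i\<le>k. real_of_int (u i) = (\<Sum>l<r. \<alpha> l * of_int (v l i))"
proof -
  have split: "(\<Sum>l<r+1. c l * of_int ((v(r:=u)) l i)) = c r * of_int (u i) + (\<Sum>l<r. c l * of_int (v l i))"
    for c :: "nat \<Rightarrow> real" and i
    by simp
  obtain c :: "nat \<Rightarrow> real" and l0 where
    c: "\<forall>i\<le>k. c r * of_int (u i) + (\<Sum>l<r. c l * of_int (v l i)) = 0" and l0: "l0 < r+1" "c l0 \<noteq> 0"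
    using dep unfolding lin_indep_int_def split by blast
  have "c r \<noteq> 0"
  proof
    assume "c r = 0"
    then have "\<forall>i\<le>k. (\<Sum>l<r. c l * of_int (v l i)) = 0" using c by simp
    then have "\<forall>l<r. c l = 0" using indep unfolding lin_indep_int_def by blast
    with \<open>c r = 0\<close> l0 show False by (cases "l0 = r") auto
  qed
  have "real_of_int (u i) = (\<Sum>l<r. (- c l / c r) * of_int (v l i))" if "i \<le> k" for i
  proof -
    have "(\<Sum>l<r. (- c l / c r) * of_int (v l i)) = - (\<Sum>l<r. c l * of_int (v l i)) / c r"
      by (simp add: sum_divide_distrib sum_negf)
    also have "- (\<Sum>l<r. c l * of_int (v l i)) = c r * of_int (u i)"
      using c that by (simp add: add_eq_0_iff)
    finally show ?thesis using \<open>c r \<noteq> 0\<close> by simp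
  qed
  then show ?thesis by (intro exI[of _ "\<lambda>l. - c l / c r"]) blast
qed

lemma dependent_replace_imp_combination:
  assumes indep: "lin_indep_int k (k+1) v" and "j \<le> k"
    and dep: "\<not> lin_indep_int k (k+1) (v(j:=w))"
  shows "\<exists>\<alpha>. \<alpha> j = 0 \<and> (\<forall>i\<le>k. real_of_int (w i) = (\<Sum>l<k+1. \<alpha> l * of_int (v l i)))"
proof -
  have split: "(\<Sum>l<k+1. c l * of_int (f l i)) = c j * of_int (f j i) + (\<Sum>l\<in>{..<k+1}-{j}. c l * of_int (f l i))"
    for c :: "nat \<Rightarrow> real" and f :: "nat \<Rightarrow> nat \<Rightarrow> int" and i
    using \<open>j \<le> k\<close> by (subst sum.remove[of _ j]) auto
  obtain c :: "nat \<Rightarrow> real" and l0 where c: "\<forall>i\<le>k. (\<Sum>l<k+1. c l * of_int ((v(j:=w)) l i)) = 0"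
    and "l0 < k+1" "c l0 \<noteq> 0"
    using dep unfolding lin_indep_int_def by blast
  have c': "c j * of_int (w i) + (\<Sum>l\<in>{..<k+1}-{j}. c l * of_int (v l i)) = 0" if "i \<le> k" for i
  proof -
    have "(\<Sum>l\<in>{..<k+1}-{j}. c l * of_int ((v(j:=w)) l i)) = (\<Sum>l\<in>{..<k+1}-{j}. c l * of_int (v l i))"
      by (intro sum.cong) auto
    then have "c j * of_int (w i) + (\<Sum>l\<in>{..<k+1}-{j}. c l * of_int (v l i))
        = (\<Sum>l<k+1. c l * of_int ((v(j:=w)) l i))"
      using split[of c "v(j:=w)" i] by simp
    also have "\<dots> = 0" using c that by simp
    finally show ?thesis .
  qed
  have "c j \<noteq> 0"
  proof
    assume "c j = 0"
    then have "\<forall>i\<le>k. (\<Sum>l<k+1. c l * of_int (v l i)) = 0" using c' split[of c v] by simp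
    then show False using indep \<open>l0 < k+1\<close> \<open>c l0 \<noteq> 0\<close> unfolding lin_indep_int_def by blast
  qed
  define \<alpha> where "\<alpha> l = (if l = j then 0 else - c l / c j)" for l
  have "real_of_int (w i) = (\<Sum>l<k+1. \<alpha> l * of_int (v l i))" if "i \<le> k" for i
  proof -
    have "(\<Sum>l<k+1. \<alpha> l * of_int (v l i)) = (\<Sum>l\<in>{..<k+1}-{j}. (- c l / c j) * of_int (v l i))"
      using split[of \<alpha> v i] by (simp add: \<alpha>_def)
    also have "\<dots> = - (\<Sum>l\<in>{..<k+1}-{j}. c l * of_int (v l i)) / c j"
      by (simp add: sum_divide_distrib sum_negf)
    also have "- (\<Sum>l\<in>{..<k+1}-{j}. c l * of_int (v l i)) = c j * of_int (w i)"
      using c' that by (simp add: add_eq_0_iff)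
    finally show ?thesis using \<open>c j \<noteq> 0\<close> by simp
  qed
  moreover have "\<alpha> j = 0" by (simp add: \<alpha>_def)
  ultimately show ?thesis by blast
qed

lemma lin_indep_int_exchange:
  assumes indep: "lin_indep_int k (k+1) v" and w: "\<exists>i\<le>k. w i \<noteq> 0"
  shows "\<exists>j\<le>k. lin_indep_int k (k+1) (v(j:=w))"
proof (rule ccontr)
  assume "\<not> ?thesis"
  then have dep: "\<And>j. j \<le> k \<Longrightarrow> \<not> lin_indep_int k (k+1) (v(j:=w))" by blast
  obtain \<alpha> where \<alpha>: "\<alpha> 0 = 0" "\<forall>i\<le>k. real_of_int (w i) = (\<Sum>l<k+1. \<alpha> l * of_int (v l i))"
    using dependent_replace_imp_combination[OF indep _ dep] by blast
  have "\<exists>l0\<le>k. \<alpha> l0 \<noteq> 0"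
  proof (rule ccontr)
    assume "\<not> ?thesis"
    then have "(\<Sum>l<k+1. \<alpha> l * of_int (v l i)) = 0" for i by (intro sum.neutral) auto
    then have "\<forall>i\<le>k. w i = 0" using \<alpha>(2) by simp
    with w show False by blast
  qed
  then obtain l0 where l0: "l0 \<le> k" "\<alpha> l0 \<noteq> 0" by blast
  obtain \<beta> where \<beta>: "\<beta> l0 = 0" "\<forall>i\<le>k. real_of_int (w i) = (\<Sum>l<k+1. \<beta> l * of_int (v l i))"
    using dependent_replace_imp_combination[OF indep l0(1) dep[OF l0(1)]] by blast
  have "\<forall>l<k+1. \<alpha> l = \<beta> l"
    using lin_indep_int_coeffs_unique[OF indep] \<alpha>(2) \<beta>(2) by simp
  then show False using l0 \<beta>(1) by simp
qed

lemma exists_nonzero_orthogonal: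
  assumes "r \<le> k"
  shows "\<exists>n::nat\<Rightarrow>real. (\<exists>i\<le>k. n i \<noteq> 0) \<and> (\<forall>l<r. (\<Sum>i\<le>k. n i * of_int (v l i)) = 0)"
proof -
  define A where "A = mat (k+1) (k+1) (\<lambda>(l,i). if l < r then real_of_int (v l i) else 0)"
  have A: "A \<in> carrier_mat (k+1) (k+1)" unfolding A_def by simp
  have "det A = (\<Sum>j<k+1. A $$ (k,j) * cofactor A k j)" by (rule laplace_expansion_row[OF A]) simp
  also have "\<dots> = 0" using assms by (simp add: A_def)
  finally obtain c where c: "c \<in> carrier_vec (k+1)" "c \<noteq> 0\<^sub>v (k+1)" "A *\<^sub>v c = 0\<^sub>v (k+1)"
    using det_0_iff_vec_prod_zero[OF A] by auto
  have "\<exists>i\<le>k. c $ i \<noteq> 0"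
    using c(1,2) by (metis Suc_eq_plus1 carrier_vecD eq_vecI index_zero_vec(1,2) less_Suc_eq_le)
  moreover have "(\<Sum>i\<le>k. c $ i * of_int (v l i)) = 0" if "l < r" for l
  proof -
    have "(A *\<^sub>v c) $ l = 0" using c(3) that assms by simp
    then show ?thesis
      using that assms c(1) by (simp add: A_def scalar_prod_def atLeast0LessThan lessThan_Suc_atMost mult.commute)
  qed
  ultimately show ?thesis by blast
qed

lemma no_lin_indep_int_imp_hyperplane:
  assumes "\<nexists>v. lin_indep_int k (k+1) v \<and> (\<forall>l<k+1. v l \<in> S)"
  shows "\<exists>n::nat\<Rightarrow>real. (\<exists>i\<le>k. n i \<noteq> 0) \<and> (\<forall>u\<in>S. (\<Sum>i\<le>k. n i * of_int (u i)) = 0)"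
proof -
  define R where "R = {r. r \<le> k+1 \<and> (\<exists>v. lin_indep_int k r v \<and> (\<forall>l<r. v l \<in> S))}"
  have "0 \<in> R" unfolding R_def lin_indep_int_def by auto
  define r where "r = Max R"
  have "finite R" unfolding R_def by simp
  then have "r \<in> R" and r_max: "\<And>r'. r' \<in> R \<Longrightarrow> r' \<le> r"
    using \<open>0 \<in> R\<close> unfolding r_def by (auto intro: Max_in)
  then obtain v where v: "lin_indep_int k r v" "\<forall>l<r. v l \<in> S" and "r \<le> k+1"
    unfolding R_def by blast
  with assms have "r \<le> k" by (cases "r = k+1") auto
  obtain n :: "nat \<Rightarrow> real" where n: "\<exists>i\<le>k. n i \<noteq> 0" "\<forall>l<r. (\<Sum>i\<le>k. n i * of_int (v l i)) = 0"
    using exists_nonzero_orthogonal[OF \<open>r \<le> k\<close>] by blast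
  have "(\<Sum>i\<le>k. n i * of_int (u i)) = 0" if "u \<in> S" for u
  proof -
    have "r + 1 \<notin> R" using r_max by fastforce
    moreover have "\<forall>l<r+1. (v(r:=u)) l \<in> S" using v(2) \<open>u \<in> S\<close> by auto
    ultimately have "\<not> lin_indep_int k (r+1) (v(r:=u))"
      using \<open>r \<le> k\<close> unfolding R_def by auto
    then obtain \<alpha> where \<alpha>: "\<forall>i\<le>k. real_of_int (u i) = (\<Sum>l<r. \<alpha> l * of_int (v l i))"
      using dependent_append_imp_combination[OF v(1)] by blast
    have "(\<Sum>i\<le>k. n i * of_int (u i)) = (\<Sum>i\<le>k. \<Sum>l<r. \<alpha> l * (n i * of_int (v l i)))"
      by (intro sum.cong) (simp_all add: \<alpha> sum_distrib_left mult_ac)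
    also have "\<dots> = (\<Sum>l<r. \<alpha> l * (\<Sum>i\<le>k. n i * of_int (v l i)))"
      by (subst sum.swap) (simp add: sum_distrib_left)
    also have "\<dots> = 0" using n(2) by simp
    finally show ?thesis .
  qed
  with n(1) show ?thesis by blast
qed

section \<open>The approximation forms and the determinant bound\<close>

definition approx_form :: "(nat \<Rightarrow> real) \<Rightarrow> (nat \<Rightarrow> int) \<Rightarrow> nat \<Rightarrow> real" where
  "approx_form zeta u i = (if i = 0 then of_int (u 0) else zeta i * of_int (u 0) - of_int (u i))"

lemma has_indep_sols_iff_approx_form:
  "has_indep_sols k j zeta eta X \<longleftrightarrow>
     (\<exists>v. lin_indep_int k j v \<and> (\<forall>l<j. \<bar>approx_form zeta (v l) 0\<bar> \<le> X \<and>
        (\<forall>i\<in>{1..k}. \<bar>approx_form zeta (v l) i\<bar> \<le> X powr (-eta))))"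
  unfolding has_indep_sols_def approx_form_def by auto

lemma has_indep_sols_1I:
  assumes "d 0 \<noteq> 0" and "\<bar>approx_form zeta d 0\<bar> \<le> X"
    and "\<And>i. i \<in> {1..k} \<Longrightarrow> \<bar>approx_form zeta d i\<bar> \<le> X powr (-eta)"
  shows "has_indep_sols k 1 zeta eta X"
proof -
  have "lin_indep_int k 1 (\<lambda>_. d)" using assms(1) lin_indep_int_1_iff by blast
  then show ?thesis unfolding has_indep_sols_iff_approx_form using assms(2,3)
    by (intro exI[of _ "\<lambda>_. d"]) simp
qed

lemma has_indep_sols_antimono:
  assumes "has_indep_sols k j zeta eta X" "X \<ge> 1" "eta' \<le> eta"
  shows "has_indep_sols k j zeta eta' X"
proof -
  have "X powr (-eta) \<le> X powr (-eta')" using assms(2,3) by (intro powr_mono) auto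
  then show ?thesis using assms(1) unfolding has_indep_sols_def by (meson order_trans)
qed

lemma lin_indep_int_abs_det_ge_1:
  assumes indep: "lin_indep_int k (k+1) v"
  shows "1 \<le> \<bar>det (mat (k+1) (k+1) (\<lambda>(r,c). real_of_int (v r c)))\<bar>"
proof -
  let ?M = "mat (k+1) (k+1) (\<lambda>(r,c). real_of_int (v r c))"
  have "det ?M \<noteq> 0"
  proof
    assume "det ?M = 0"
    then have "det (transpose_mat ?M) = 0" by (subst det_transpose) auto
    then obtain c where c: "c \<in> carrier_vec (k+1)" "c \<noteq> 0\<^sub>v (k+1)" "transpose_mat ?M *\<^sub>v c = 0\<^sub>v (k+1)"
      using det_0_iff_vec_prod_zero[of "transpose_mat ?M" "k+1"] by auto
    have "(\<Sum>l<k+1. (c $ l) * of_int (v l i)) = 0" if "i \<le> k" for i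
    proof -
      have "(transpose_mat ?M *\<^sub>v c) $ i = 0" using c(3) that by simp
      then show ?thesis
        using that c(1) by (simp add: scalar_prod_def lessThan_atLeast0 mult.commute)
    qed
    then have "\<forall>l<k+1. c $ l = 0"
      using spec[OF indep[unfolded lin_indep_int_def], of "\<lambda>l. c $ l"] by blast
    then have "c = 0\<^sub>v (k+1)" using c(1) by (intro eq_vecI) auto
    with c(2) show False by simp
  qed
  moreover have "det ?M \<in> \<int>"
    by (subst det_def'[of _ "k+1"]) (auto intro!: Ints_sum Ints_mult Ints_prod simp: sign_def)
  ultimately show ?thesis using Ints_nonzero_abs_ge1 by blast
qed

text \<open>The matrix of the forms arises from the integer matrix by the column operations
  \<open>C\<^sub>c \<mapsto> \<zeta>\<^sub>c C\<^sub>0 - C\<^sub>c\<close>, which change the determinant only by the sign \<open>(-1)\<^sup>k\<close>.\<close>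

lemma abs_det_approx_form_mat:
  "\<bar>det (mat (k+1) (k+1) (\<lambda>(r,c). approx_form zeta (v r) c))\<bar>
     = \<bar>det (mat (k+1) (k+1) (\<lambda>(r,c). real_of_int (v r c)))\<bar>"
proof -
  define n where "n = k + 1"
  define M where "M = mat n n (\<lambda>(r,c). real_of_int (v r c))"
  define E :: "real mat" where "E = mat n n (\<lambda>(i,c). (if i = 0 then (if c = 0 then 1 else zeta c) else 0)
       + (if i = c \<and> c \<noteq> 0 then -1 else 0))"
  have M: "M \<in> carrier_mat n n" and E: "E \<in> carrier_mat n n" unfolding M_def E_def by auto
  have "diag_mat E = map (\<lambda>i. E $$ (i,i)) (0 # [1..<n])"
    unfolding diag_mat_def E_def n_def by (simp add: upt_rec)
  also have "\<dots> = 1 # map (\<lambda>i. -1) [1..<n]"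
    unfolding list.map(2) by (intro arg_cong2[where f = Cons] map_cong) (auto simp: E_def n_def)
  finally have "det E = prod_list (1 # map (\<lambda>i. -1) [1..<n])"
    using det_upper_triangular[OF _ E] unfolding upper_triangular_def E_def by simp
  then have det_E: "\<bar>det E\<bar> = 1" by (simp add: map_replicate_const)
  have entries: "(M * E) $$ (r,c) = approx_form zeta (v r) c" if "r < n" "c < n" for r c
  proof -
    have "(M * E) $$ (r,c) = (\<Sum>i\<in>{0..<n}. real_of_int (v r i) * E $$ (i,c))"
      using that E unfolding M_def by (auto simp: scalar_prod_def row_def col_def)
    also have "\<dots> = real_of_int (v r 0) * E $$ (0,c) + (\<Sum>i\<in>{Suc 0..<n}. real_of_int (v r i) * E $$ (i,c))"
      using that by (subst sum.atLeast_Suc_lessThan) auto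
    also have "(\<Sum>i\<in>{Suc 0..<n}. real_of_int (v r i) * E $$ (i,c))
        = (\<Sum>i\<in>{Suc 0..<n}. if i = c then - real_of_int (v r c) else 0)"
      by (rule sum.cong[OF refl]) (use that in \<open>auto simp: E_def\<close>)
    finally show ?thesis using that by (auto simp: E_def approx_form_def)
  qed
  have "M * E = mat n n (\<lambda>(r,c). approx_form zeta (v r) c)"
    by (rule eq_matI) (use M E entries in auto)
  then show ?thesis
    using det_mult[OF M E] det_E unfolding M_def n_def by (simp add: abs_mult del: det_mult)
qed

lemma prod_perm_le_row_bounds:
  fixes a :: "nat \<Rightarrow> nat \<Rightarrow> real"
  assumes p: "p permutes {..k}"
    and bound: "\<And>r c. r \<le> k \<Longrightarrow> c \<le> k \<Longrightarrow> \<bar>a r c\<bar> \<le> (if c = 0 then P r else Q r)"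
    and P: "\<And>r. r \<le> k \<Longrightarrow> 0 \<le> P r" and Q: "\<And>r. r \<le> k \<Longrightarrow> 0 \<le> Q r"
  shows "(\<Prod>r\<le>k. \<bar>a r (p r)\<bar>) \<le> (\<Sum>r\<le>k. P r * (\<Prod>r'\<in>{..k}-{r}. Q r'))"
proof -
  obtain r0 where r0: "r0 \<le> k" "p r0 = 0"
    using permutes_surj[OF p] by (metis atMost_iff imageE le0 permutes_image p)
  have "(\<Prod>r\<le>k. \<bar>a r (p r)\<bar>) = \<bar>a r0 0\<bar> * (\<Prod>r\<in>{..k}-{r0}. \<bar>a r (p r)\<bar>)"
    using r0 by (simp add: prod.remove)
  also have "\<dots> \<le> P r0 * (\<Prod>r\<in>{..k}-{r0}. Q r)"
  proof (intro mult_mono prod_mono conjI)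
    fix r assume r: "r \<in> {..k}-{r0}"
    then have "p r \<noteq> 0" using r0 permutes_inj[OF p] by (metis DiffE inj_eq singletonI)
    moreover have "p r \<le> k" using r permutes_in_image[OF p, of r] by auto
    ultimately show "\<bar>a r (p r)\<bar> \<le> Q r" using bound[of r "p r"] r by simp
  qed (use bound[of r0 0] r0 P in \<open>auto intro: prod_nonneg\<close>)
  also have "\<dots> \<le> (\<Sum>r\<le>k. P r * (\<Prod>r'\<in>{..k}-{r}. Q r'))"
    using r0 P Q by (intro member_le_sum[where f = "\<lambda>r. P r * (\<Prod>r'\<in>{..k}-{r}. Q r')"])
      (auto intro!: mult_nonneg_nonneg prod_nonneg)
  finally show ?thesis .
qed

lemma abs_det_le_row_bounds:
  fixes A :: "real mat"
  assumes A: "A \<in> carrier_mat (k+1) (k+1)"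
    and bound: "\<And>r c. r \<le> k \<Longrightarrow> c \<le> k \<Longrightarrow> \<bar>A $$ (r,c)\<bar> \<le> (if c = 0 then P r else Q r)"
    and P: "\<And>r. r \<le> k \<Longrightarrow> 0 \<le> P r" and Q: "\<And>r. r \<le> k \<Longrightarrow> 0 \<le> Q r"
  shows "\<bar>det A\<bar> \<le> fact (k+1) * (\<Sum>r\<le>k. P r * (\<Prod>r'\<in>{..k}-{r}. Q r'))"
proof -
  have idx: "{0..<k+1} = {..k}" by auto
  have "\<bar>det A\<bar> \<le> (\<Sum>p\<in>{p. p permutes {..k}}. \<bar>signof p * (\<Prod>r\<le>k. A $$ (r, p r))\<bar>)"
    unfolding det_def'[OF A] idx by (rule sum_abs)
  also have "\<dots> \<le> (\<Sum>p\<in>{p. p permutes {..k}}. (\<Sum>r\<le>k. P r * (\<Prod>r'\<in>{..k}-{r}. Q r')))"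
  proof (rule sum_mono)
    fix p assume "p \<in> {p. p permutes {..k}}"
    then have "(\<Prod>r\<le>k. \<bar>A $$ (r, p r)\<bar>) \<le> (\<Sum>r\<le>k. P r * (\<Prod>r'\<in>{..k}-{r}. Q r'))"
      using bound P Q by (intro prod_perm_le_row_bounds[where a = "\<lambda>r c. A $$ (r,c)"]) auto
    then show "\<bar>signof p * (\<Prod>r\<le>k. A $$ (r, p r))\<bar> \<le> (\<Sum>r\<le>k. P r * (\<Prod>r'\<in>{..k}-{r}. Q r'))"
      by (simp add: abs_mult abs_prod sign_def)
  qed
  also have "\<dots> = real (card {p. p permutes {..k}}) * (\<Sum>r\<le>k. P r * (\<Prod>r'\<in>{..k}-{r}. Q r'))"
    by simp
  also have "real (card {p. p permutes {..k}}) = fact (k+1)"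
    using card_permutations[of "{..k}" "k+1"] by (simp add: algebra_simps)
  finally show ?thesis .
qed

lemma lin_indep_int_bound:
  assumes indep: "lin_indep_int k (k+1) v" and "k \<ge> 1"
    and P: "\<And>r. r \<le> k \<Longrightarrow> \<bar>approx_form zeta (v r) 0\<bar> \<le> P r"
    and Q: "\<And>r i. r \<le> k \<Longrightarrow> i \<in> {1..k} \<Longrightarrow> \<bar>approx_form zeta (v r) i\<bar> \<le> Q r"
  shows "1 \<le> fact (k+1) * (\<Sum>r\<le>k. P r * (\<Prod>r'\<in>{..k}-{r}. Q r'))"
proof -
  have "1 \<le> \<bar>det (mat (k+1) (k+1) (\<lambda>(r,c). approx_form zeta (v r) c))\<bar>"
    using lin_indep_int_abs_det_ge_1[OF indep] abs_det_approx_form_mat by metis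
  also have "\<dots> \<le> fact (k+1) * (\<Sum>r\<le>k. P r * (\<Prod>r'\<in>{..k}-{r}. Q r'))"
  proof (rule abs_det_le_row_bounds)
    show "0 \<le> Q r" if "r \<le> k" for r
      using Q[OF that, of 1] \<open>k \<ge> 1\<close> by (meson abs_ge_zero atLeastAtMost_iff order_trans order_refl)
  qed (use P Q in \<open>auto intro: order_trans[OF abs_ge_zero]\<close>)
  finally show ?thesis .
qed

lemma sum_prod_one_special:
  fixes A B C D :: real
  assumes j: "j \<le> k" and k: "k \<ge> 1"
  shows "(\<Sum>r\<le>k. (if r = j then A else B) * (\<Prod>r'\<in>{..k}-{r}. if r' = j then C else D))
         = A * D ^ k + real k * (B * C * D ^ (k-1))"
proof -
  have "(\<Prod>r'\<in>{..k}-{j}. if r' = j then C else D) = D ^ k"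
    using j by (simp add: card_Diff_singleton)
  moreover have "(\<Prod>r'\<in>{..k}-{r}. if r' = j then C else D) = C * D ^ (k-1)" if "r \<in> {..k}-{j}" for r
  proof -
    have "(\<Prod>r'\<in>{..k}-{r}. if r' = j then C else D) = C * (\<Prod>r'\<in>{..k}-{r}-{j}. if r' = j then C else D)"
      using that j by (subst prod.remove[of _ j]) auto
    also have "card ({..k}-{r}-{j}) = k - 1" using that j by (simp add: card_Diff_singleton)
    then have "(\<Prod>r'\<in>{..k}-{r}-{j}. if r' = j then C else D) = D ^ (k-1)" by simp
    finally show ?thesis .
  qed
  then have "(\<Sum>r\<in>{..k}-{j}. (if r = j then A else B) * (\<Prod>r'\<in>{..k}-{r}. if r' = j then C else D))
        = real k * (B * (C * D ^ (k-1)))"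
    using j by (simp add: card_Diff_singleton)
  ultimately show ?thesis using j by (simp add: sum.remove[of _ j] mult.assoc)
qed

lemma lin_indep_int_bound_special_row:
  assumes indep: "lin_indep_int k (k+1) v" and k: "k \<ge> 1" and j: "j \<le> k"
    and rows: "\<And>r. r \<le> k \<Longrightarrow> r \<noteq> j \<Longrightarrow>
        \<bar>approx_form zeta (v r) 0\<bar> \<le> P \<and> (\<forall>i\<in>{1..k}. \<bar>approx_form zeta (v r) i\<bar> \<le> Q)"
    and row_j: "\<bar>approx_form zeta (v j) 0\<bar> \<le> P'" "\<forall>i\<in>{1..k}. \<bar>approx_form zeta (v j) i\<bar> \<le> Q'"
  shows "1 \<le> fact (k+1) * (P' * Q ^ k + real k * (P * Q' * Q ^ (k-1)))"
proof -
  have "1 \<le> fact (k+1) * (\<Sum>r\<le>k. (if r = j then P' else P) * (\<Prod>r'\<in>{..k}-{r}. if r' = j then Q' else Q))"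
    by (rule lin_indep_int_bound[OF indep k]) (use rows row_j in auto)
  then show ?thesis unfolding sum_prod_one_special[OF j k] .
qed

lemma lin_indep_int_bound_powr:
  assumes indep: "lin_indep_int k (k+1) v" and k: "k \<ge> 1" and j: "j \<le> k" and X: "X > 0"
    and rows: "\<And>r. r \<le> k \<Longrightarrow> r \<noteq> j \<Longrightarrow>
        \<bar>approx_form zeta (v r) 0\<bar> \<le> X \<and> (\<forall>i\<in>{1..k}. \<bar>approx_form zeta (v r) i\<bar> \<le> X powr (-e))"
    and row_j: "\<bar>approx_form zeta (v j) 0\<bar> \<le> X powr a"
      "\<forall>i\<in>{1..k}. \<bar>approx_form zeta (v j) i\<bar> \<le> X powr (-b)"
  shows "1 \<le> fact (k+1) * (X powr (a - real k * e) + real k * X powr (1 - b - (real k - 1) * e))"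
proof -
  have "X powr a * (X powr (-e)) ^ k = X powr (a - real k * e)"
    using X by (simp add: powr_power powr_add[symmetric])
  moreover have "X * X powr (-b) * (X powr (-e)) ^ (k-1) = X powr (1 - b - (real k - 1) * e)"
    using X k by (simp add: powr_power powr_add[symmetric] powr_mult_base of_nat_diff algebra_simps)
  ultimately show ?thesis
    using lin_indep_int_bound_special_row[OF indep k j rows row_j] by simp
qed

section \<open>Upper bounds for the last exponent\<close>

lemma frequently_full_indep_sols_imp_le:
  assumes k: "k \<ge> 1" and full: "\<exists>\<^sub>F X in at_top. has_indep_sols k (k+1) zeta eta X"
  shows "eta \<le> 1 / real k"
proof (rule ccontr)
  assume "\<not> eta \<le> 1 / real k"
  then have neg: "1 - real k * eta < 0" using k by (simp add: field_simps)
  define C where "C = fact (k+1) * (real k + 1)"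
  have "C > 0" unfolding C_def by simp
  have "\<forall>\<^sub>F X in at_top. (X::real) > 0" by (rule eventually_gt_at_top)
  moreover have "\<forall>\<^sub>F X in at_top. X powr (1 - real k * eta) < 1 / C"
    using neg \<open>C > 0\<close> by real_asymp
  ultimately obtain X where X: "has_indep_sols k (k+1) zeta eta X" "X > 0" "X powr (1 - real k * eta) < 1 / C"
    using frequently_ex[OF frequently_eventually_frequently[OF full eventually_conj]] by blast
  then obtain v where v: "lin_indep_int k (k+1) v"
    "\<forall>l<k+1. \<bar>approx_form zeta (v l) 0\<bar> \<le> X \<and> (\<forall>i\<in>{1..k}. \<bar>approx_form zeta (v l) i\<bar> \<le> X powr (-eta))"
    unfolding has_indep_sols_iff_approx_form by blast
  have "1 \<le> fact (k+1) * (X powr (1 - real k * eta) + real k * X powr (1 - eta - (real k - 1) * eta))"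
    by (rule lin_indep_int_bound_powr[OF v(1) k le0 \<open>X > 0\<close>]) (use v(2) \<open>X > 0\<close> in auto)
  also have "\<dots> = C * X powr (1 - real k * eta)" unfolding C_def by (simp add: algebra_simps)
  also have "\<dots> < 1" using X(3) \<open>C > 0\<close> by (simp add: field_simps)
  finally show False by simp
qed

lemma exponent_between:
  fixes k :: nat and theta e :: real
  assumes k: "k \<ge> 1" and theta: "theta > 0"
    and e: "1 / (real k * theta + real k - 1) < e" "e < 1 / real k"
  shows "\<exists>a>0. a < real k * e \<and> 1 - (real k - 1) * e < a * theta"
proof -
  define lo where "lo = (1 - (real k - 1) * e) / theta"
  have "real k * theta > 0" using k theta by simp
  then have pos: "real k * theta + real k - 1 > 0" using k by linarith
  then have "0 < e" using e(1) by (smt (verit) divide_pos_pos)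
  then have ke: "0 < real k * e" using k by simp
  have "1 < e * (real k * theta + real k - 1)" using e(1) pos by (simp add: pos_divide_less_eq)
  moreover have "e * (real k * theta + real k - 1) = (real k * e) * theta + (real k - 1) * e"
    by (simp add: algebra_simps)
  moreover have lo: "lo * theta = 1 - (real k - 1) * e" unfolding lo_def using theta by simp
  ultimately have "lo * theta < (real k * e) * theta" by linarith
  then have "lo < real k * e" using theta by simp
  then obtain a where a: "max 0 lo < a" "a < real k * e" using ke dense[of "max 0 lo" "real k * e"] by auto
  then have "lo * theta < a * theta" using theta by (intro mult_strict_right_mono) auto
  then have "1 - (real k - 1) * e < a * theta" using lo by simp
  with a show ?thesis by auto
qed

lemma indep_sols_exchange_bound:
  assumes k: "k \<ge> 1" and X: "X \<ge> 1"
    and full: "has_indep_sols k (k+1) zeta e X" and single: "has_indep_sols k 1 zeta theta (X powr a)"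
  shows "1 \<le> fact (k+1) * (X powr (a - real k * e) + real k * X powr (1 - a * theta - (real k - 1) * e))"
proof -
  obtain v where v: "lin_indep_int k (k+1) v"
    "\<forall>l<k+1. \<bar>approx_form zeta (v l) 0\<bar> \<le> X \<and> (\<forall>i\<in>{1..k}. \<bar>approx_form zeta (v l) i\<bar> \<le> X powr (-e))"
    using full unfolding has_indep_sols_iff_approx_form by blast
  obtain w where w: "lin_indep_int k 1 w" "\<bar>approx_form zeta (w 0) 0\<bar> \<le> X powr a"
    "\<forall>i\<in>{1..k}. \<bar>approx_form zeta (w 0) i\<bar> \<le> X powr (- (a * theta))"
    using single X unfolding has_indep_sols_iff_approx_form by (auto simp: powr_powr)
  obtain j where j: "j \<le> k" "lin_indep_int k (k+1) (v(j := w 0))"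
    using lin_indep_int_exchange[OF v(1)] w(1) unfolding lin_indep_int_1_iff by blast
  show ?thesis
    by (rule lin_indep_int_bound_powr[OF j(2) k j(1)]) (use X v(2) w(2,3) in auto)
qed

lemma frequently_full_indep_sols_imp_le_if_uniform:
  assumes k: "k \<ge> 1" and theta: "theta > 1 / real k"
    and uniform: "\<forall>\<^sub>F Y in at_top. has_indep_sols k 1 zeta theta Y"
    and full: "\<exists>\<^sub>F X in at_top. has_indep_sols k (k+1) zeta eta X"
  shows "eta \<le> 1 / (real k * theta + real k - 1)"
proof (rule ccontr)
  define c where "c = 1 / (real k * theta + real k - 1)"
  define F :: real where "F = fact (k+1)"
  assume "\<not> eta \<le> 1 / (real k * theta + real k - 1)"
  then have "c < eta" unfolding c_def by simp
  have kpos: "real k > 0" using k by simp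
  then have k_theta: "real k * theta > 1" using theta by (simp add: field_simps)
  then have "theta > 0" using zero_less_mult_pos[of "real k" theta] kpos by linarith
  have "c < 1 / real k" unfolding c_def using kpos k_theta by (intro frac_less2) auto
  define e where "e = min eta ((c + 1 / real k) / 2)"
  have e: "c < e" "e < 1 / real k" "e \<le> eta"
    unfolding e_def using \<open>c < eta\<close> \<open>c < 1 / real k\<close> by (auto simp: min_def)
  \<comment> \<open>both terms of the exchange bound then tend to \<open>0\<close>\<close>
  obtain a where a: "a > 0" "a - real k * e < 0" "1 - a * theta - (real k - 1) * e < 0"
    using exponent_between[OF k \<open>theta > 0\<close>, of e] e unfolding c_def by auto
  have F: "F > 0" unfolding F_def by simp
  have "\<forall>\<^sub>F X in at_top. (X::real) \<ge> 1" by (rule eventually_ge_at_top)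
  moreover have "\<forall>\<^sub>F X in at_top. X powr (a - real k * e) < 1 / (2 * F)"
    using a(2) F by real_asymp
  moreover have "\<forall>\<^sub>F X in at_top. X powr (1 - a * theta - (real k - 1) * e) < 1 / (2 * F * real k)"
    using a(3) F kpos by real_asymp
  moreover have "filterlim (\<lambda>X. X powr a) at_top at_top" using a(1) by real_asymp
  then have "\<forall>\<^sub>F X in at_top. has_indep_sols k 1 zeta theta (X powr a)"
    by (rule eventually_compose_filterlim[OF uniform])
  ultimately have ev: "\<forall>\<^sub>F X in at_top. X \<ge> 1 \<and> X powr (a - real k * e) < 1 / (2 * F) \<and>
      X powr (1 - a * theta - (real k - 1) * e) < 1 / (2 * F * real k) \<and>
      has_indep_sols k 1 zeta theta (X powr a)"
    by eventually_elim blast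
  obtain X where X: "has_indep_sols k (k+1) zeta eta X" "X \<ge> 1"
    "X powr (a - real k * e) < 1 / (2 * F)" "X powr (1 - a * theta - (real k - 1) * e) < 1 / (2 * F * real k)"
    "has_indep_sols k 1 zeta theta (X powr a)"
    using frequently_ex[OF frequently_eventually_frequently[OF full ev]] by blast
  have "1 \<le> F * (X powr (a - real k * e) + real k * X powr (1 - a * theta - (real k - 1) * e))"
    unfolding F_def using has_indep_sols_antimono[OF X(1,2) e(3)] X(5)
    by (rule indep_sols_exchange_bound[OF k X(2)])
  also have "\<dots> < F * (1 / (2 * F) + real k * (1 / (2 * F * real k)))"
    using X(3,4) F kpos by (intro mult_strict_left_mono add_strict_mono) auto
  also have "\<dots> = 1" using F kpos by (simp add: field_simps)
  finally show False by simp
qed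

section \<open>The box principle\<close>

text \<open>Cells of side lengths \<open>w\<^sub>i\<close> needed to cover \<open>[0, N+1) \<times> [0, 1)\<^sup>k\<close>, the range of
  \<open>x \<mapsto> (x, {\<zeta>\<^sub>1 x}, \<dots>, {\<zeta>\<^sub>k x})\<close> on \<open>{0..N}\<close>.\<close>

definition box_count :: "nat \<Rightarrow> nat \<Rightarrow> (nat \<Rightarrow> real) \<Rightarrow> nat" where
  "box_count k N w = (\<Prod>i\<le>k. nat \<lceil>(if i = 0 then real N + 1 else 1) / w i\<rceil>)"

lemma abs_diff_less_if_floor_divide_eq:
  fixes a b w :: real
  assumes "w > 0" "\<lfloor>a / w\<rfloor> = \<lfloor>b / w\<rfloor>"
  shows "\<bar>a - b\<bar> < w"
proof -
  have "\<bar>a / w - b / w\<bar> < 1"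
    using assms(2) floor_correct[of "a/w"] floor_correct[of "b/w"] by linarith
  then show ?thesis using assms(1) by (simp add: diff_divide_distrib[symmetric] abs_divide)
qed

lemma pigeonhole_approx:
  fixes zeta w :: "nat \<Rightarrow> real"
  assumes wpos: "\<And>i. i \<le> k \<Longrightarrow> w i > 0" and count: "box_count k N w \<le> N"
  shows "\<exists>d. d 0 \<noteq> 0 \<and> \<bar>real_of_int (d 0)\<bar> \<le> real N \<and> (\<forall>i\<le>k. \<bar>approx_form zeta d i\<bar> < w i)"
proof -
  define R :: "nat \<Rightarrow> real" where "R i = (if i = 0 then real N + 1 else 1)" for i
  define co :: "nat \<Rightarrow> nat \<Rightarrow> real" where "co x i = (if i = 0 then real x else frac (zeta i * real x))" for x i
  define cell where "cell x = restrict (\<lambda>i. nat \<lfloor>co x i / w i\<rfloor>) {..k}" for x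
  define T where "T = (\<Pi>\<^sub>E i\<in>{..k}. {..<nat \<lceil>R i / w i\<rceil>})"
  have co_bound: "0 \<le> co x i \<and> co x i < R i" if "x \<le> N" for x i
    using that unfolding co_def R_def by (auto simp: frac_lt_1)
  have "cell ` {..N} \<subseteq> T"
  proof
    fix z assume "z \<in> cell ` {..N}"
    then obtain x where x: "x \<le> N" "z = cell x" by auto
    have "nat \<lfloor>co x i / w i\<rfloor> < nat \<lceil>R i / w i\<rceil>" if "i \<le> k" for i
    proof -
      have "co x i / w i < R i / w i" using co_bound[OF x(1)] wpos[OF that] by (simp add: divide_strict_right_mono)
      then have "\<lfloor>co x i / w i\<rfloor> < \<lceil>R i / w i\<rceil>" by linarith
      moreover have "0 \<le> \<lfloor>co x i / w i\<rfloor>" using co_bound[OF x(1)] wpos[OF that] by simp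
      ultimately show ?thesis by (metis nat_less_eq_zless)
    qed
    then show "z \<in> T" unfolding T_def x(2) cell_def by auto
  qed
  then have "card (cell ` {..N}) \<le> card T" unfolding T_def by (intro card_mono) (auto intro!: finite_PiE)
  also have "card T = box_count k N w" unfolding T_def box_count_def R_def by (simp add: card_PiE)
  finally have "\<not> inj_on cell {..N}" using count by (auto dest: card_image)
  then obtain x x' where xx: "x \<le> N" "x' \<le> N" "x \<noteq> x'" "cell x = cell x'"
    unfolding inj_on_def by auto
  have close: "\<bar>co x i - co x' i\<bar> < w i" if "i \<le> k" for i
  proof -
    have "nat \<lfloor>co x i / w i\<rfloor> = nat \<lfloor>co x' i / w i\<rfloor>"
      using fun_cong[OF xx(4), of i] that unfolding cell_def by simp
    moreover have "0 \<le> \<lfloor>co x i / w i\<rfloor>" "0 \<le> \<lfloor>co x' i / w i\<rfloor>" using co_bound xx wpos[OF that] by auto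
    ultimately have "\<lfloor>co x i / w i\<rfloor> = \<lfloor>co x' i / w i\<rfloor>" by (metis nat_eq_iff2 zero_le_floor)
    then show ?thesis using abs_diff_less_if_floor_divide_eq wpos[OF that] by blast
  qed
  define d where "d i = (if i = 0 then int x - int x' else \<lfloor>zeta i * real x\<rfloor> - \<lfloor>zeta i * real x'\<rfloor>)" for i
  have "approx_form zeta d i = co x i - co x' i" for i
    unfolding approx_form_def d_def co_def frac_def by (auto simp: algebra_simps)
  moreover have "d 0 \<noteq> 0" "\<bar>real_of_int (d 0)\<bar> \<le> real N" using xx(1-3) unfolding d_def by auto
  ultimately show ?thesis using close by (intro exI[of _ d]) auto
qed

lemma dirichlet_eventually:
  assumes k: "k \<ge> 1" and eta: "0 < eta" "eta < 1 / real k"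
  shows "\<forall>\<^sub>F X in at_top. has_indep_sols k 1 zeta eta X"
proof -
  have "\<forall>\<^sub>F X in at_top. (X::real) \<ge> 1" by (rule eventually_ge_at_top)
  moreover have "\<forall>\<^sub>F X in at_top. X powr (1 / real k - eta) \<ge> 2" using eta(2) by real_asymp
  ultimately show ?thesis
  proof eventually_elim
    fix X :: real assume X: "X \<ge> 1" "X powr (1 / real k - eta) \<ge> 2"
    define Q where "Q = nat \<lfloor>X powr (1 / real k)\<rfloor>"
    define N where "N = nat \<lfloor>X\<rfloor>"
    have Xe1: "X powr eta \<ge> 1" using X eta by (simp add: ge_one_powr_ge_zero)
    have "X powr (1 / real k) = X powr eta * X powr (1 / real k - eta)" by (simp add: powr_add[symmetric])
    also have "\<dots> \<ge> X powr eta * 2" using X Xe1 by (intro mult_left_mono) auto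
    finally have "X powr (1 / real k) \<ge> 2 * X powr eta" by simp
    moreover have "real Q > X powr (1 / real k) - 1" "real Q \<le> X powr (1 / real k)"
      unfolding Q_def using X by (auto simp: of_nat_nat)
    ultimately have Q: "real Q \<ge> X powr eta" "real Q \<ge> 1" using Xe1 by linarith+
    have "real Q ^ k \<le> (X powr (1 / real k)) ^ k" using \<open>real Q \<le> _\<close> by (intro power_mono) auto
    also have "\<dots> = X" using X k by (simp add: powr_power)
    finally have "Q ^ k \<le> N" unfolding N_def using le_nat_floor[of "Q ^ k" X] by simp
    define w :: "nat \<Rightarrow> real" where "w i = (if i = 0 then real N + 1 else 1 / real Q)" for i
    have "box_count k N w = (\<Prod>i\<le>k. if i = 0 then 1 else Q)"
      unfolding box_count_def w_def by (rule prod.cong) (use Q in auto)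
    also have "\<dots> = Q ^ k"
    proof -
      have "{..k} \<inter> - {0} = {1..k}" by auto
      then show ?thesis by (simp add: prod.If_cases)
    qed
    finally have "box_count k N w \<le> N" using \<open>Q ^ k \<le> N\<close> by simp
    moreover have "\<And>i. i \<le> k \<Longrightarrow> w i > 0" unfolding w_def using Q by auto
    ultimately obtain d where d: "d 0 \<noteq> 0" "\<bar>real_of_int (d 0)\<bar> \<le> real N"
      "\<forall>i\<le>k. \<bar>approx_form zeta d i\<bar> < w i"
      using pigeonhole_approx by blast
    have "1 / real Q \<le> X powr (- eta)" using Q Xe1 X(1) by (simp add: powr_minus divide_simps)
    moreover have "real N \<le> X" unfolding N_def using X by linarith
    ultimately show "has_indep_sols k 1 zeta eta X"
    proof (intro has_indep_sols_1I[where d = d] d(1))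
      fix i :: nat assume "i \<in> {1..k}"
      then have "\<bar>approx_form zeta d i\<bar> < 1 / real Q" using d(3)[rule_format, of i] by (simp add: w_def)
      with \<open>1 / real Q \<le> X powr (- eta)\<close> show "\<bar>approx_form zeta d i\<bar> \<le> X powr (- eta)" by simp
    qed (use d(2) in \<open>simp add: approx_form_def\<close>)
  qed
qed

section \<open>A lower bound for the last exponent\<close>

lemma lin_form_in_approx_coords:
  fixes n zeta :: "nat \<Rightarrow> real"
  assumes "\<exists>i\<le>k. n i \<noteq> 0"
  shows "\<exists>m. (\<exists>i\<le>k. m i \<noteq> 0) \<and>
    (\<forall>u. (\<Sum>i\<le>k. n i * of_int (u i)) = (\<Sum>i\<le>k. m i * approx_form zeta u i))"
proof -
  define m where "m i = (if i = 0 then n 0 + (\<Sum>i'\<in>{1..k}. n i' * zeta i') else - n i)" for i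
  have split: "(\<Sum>i\<le>k. f i) = f 0 + (\<Sum>i\<in>{1..k}. f i)" for f :: "nat \<Rightarrow> real"
  proof -
    have "{..k} = insert 0 {1..k}" by auto
    then show ?thesis by simp
  qed
  have "(\<Sum>i\<le>k. m i * approx_form zeta u i) = (\<Sum>i\<le>k. n i * of_int (u i))" for u
  proof -
    have "(\<Sum>i\<in>{1..k}. m i * approx_form zeta u i)
        = (\<Sum>i\<in>{1..k}. n i * of_int (u i) - (n i * zeta i) * of_int (u 0))"
      by (rule sum.cong) (auto simp: m_def approx_form_def algebra_simps)
    also have "\<dots> = (\<Sum>i\<in>{1..k}. n i * of_int (u i)) - (\<Sum>i\<in>{1..k}. n i * zeta i) * of_int (u 0)"
      by (simp add: sum_subtractf sum_distrib_right)
    finally have "(\<Sum>i\<in>{1..k}. m i * approx_form zeta u i)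
        = (\<Sum>i\<in>{1..k}. n i * of_int (u i)) - (\<Sum>i\<in>{1..k}. n i * zeta i) * of_int (u 0)" .
    moreover have "m 0 * approx_form zeta u 0 = n 0 * of_int (u 0) + (\<Sum>i\<in>{1..k}. n i * zeta i) * of_int (u 0)"
      by (simp add: m_def approx_form_def algebra_simps)
    ultimately show ?thesis by (simp add: split[of "\<lambda>i. m i * approx_form zeta u i"] split[of "\<lambda>i. n i * of_int (u i)"])
  qed
  moreover have "\<exists>i\<le>k. m i \<noteq> 0"
  proof (rule ccontr)
    assume "\<not> ?thesis"
    then have m0: "m i = 0" if "i \<le> k" for i using that by blast
    have n: "n i = 0" if "i \<in> {1..k}" for i using m0[of i] that by (simp add: m_def)
    then have "n 0 = 0" using m0[of 0] by (simp add: m_def)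
    with n have "n i = 0" if "i \<le> k" for i using that by (cases "i = 0") auto
    with assms show False by blast
  qed
  ultimately show ?thesis by (intro exI[of _ m]) auto
qed

lemma approx_forms_hyperplane:
  assumes "\<not> has_indep_sols k (k+1) zeta eta X"
  obtains m where "\<exists>i\<le>k. m i \<noteq> 0"
    "\<And>u. \<bar>approx_form zeta u 0\<bar> \<le> X \<Longrightarrow> (\<forall>i\<in>{1..k}. \<bar>approx_form zeta u i\<bar> \<le> X powr (-eta)) \<Longrightarrow>
      (\<Sum>i\<le>k. m i * approx_form zeta u i) = 0"
proof -
  define S where "S = {u. \<bar>approx_form zeta u 0\<bar> \<le> X \<and>
      (\<forall>i\<in>{1..k}. \<bar>approx_form zeta u i\<bar> \<le> X powr (-eta))}"
  have "\<nexists>v. lin_indep_int k (k+1) v \<and> (\<forall>l<k+1. v l \<in> S)"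
    using assms unfolding has_indep_sols_iff_approx_form S_def by blast
  then obtain n :: "nat \<Rightarrow> real" where n: "\<exists>i\<le>k. n i \<noteq> 0" "\<forall>u\<in>S. (\<Sum>i\<le>k. n i * of_int (u i)) = 0"
    using no_lin_indep_int_imp_hyperplane[of k S] by blast
  then obtain m where m: "\<exists>i\<le>k. m i \<noteq> 0"
    "\<And>u. (\<Sum>i\<le>k. n i * of_int (u i)) = (\<Sum>i\<le>k. m i * approx_form zeta u i)"
    using lin_form_in_approx_coords[of k n zeta] by blast
  show thesis
  proof (rule that[OF m(1)])
    fix u assume "\<bar>approx_form zeta u 0\<bar> \<le> X" "\<forall>i\<in>{1..k}. \<bar>approx_form zeta u i\<bar> \<le> X powr (-eta)"
    then have "u \<in> S" unfolding S_def by blast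
    then show "(\<Sum>i\<le>k. m i * approx_form zeta u i) = 0" using n(2) m(2)[of u] by simp
  qed
qed

lemma abs_le_if_dominant_term:
  fixes m e s :: "nat \<Rightarrow> real"
  assumes sum: "(\<Sum>i\<le>k. m i * e i) = 0" and j: "j \<le> k" "m j \<noteq> 0"
    and dominant: "\<And>i. i \<le> k \<Longrightarrow> \<bar>m i\<bar> * s i \<le> \<bar>m j\<bar> * s j"
    and small: "\<And>i. i \<le> k \<Longrightarrow> i \<noteq> j \<Longrightarrow> \<bar>e i\<bar> \<le> s i"
  shows "\<bar>e j\<bar> \<le> real k * s j"
proof -
  have "m j * e j = - (\<Sum>i\<in>{..k}-{j}. m i * e i)"
    using sum j by (simp add: sum.remove[of _ j] eq_neg_iff_add_eq_0)
  then have "\<bar>m j\<bar> * \<bar>e j\<bar> = \<bar>\<Sum>i\<in>{..k}-{j}. m i * e i\<bar>" by (simp add: abs_mult[symmetric])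
  also have "\<dots> \<le> (\<Sum>i\<in>{..k}-{j}. \<bar>m i\<bar> * s i)"
    by (rule order_trans[OF sum_abs sum_mono]) (use small in \<open>auto simp: abs_mult intro: mult_left_mono\<close>)
  also have "\<dots> \<le> (\<Sum>i\<in>{..k}-{j}. \<bar>m j\<bar> * s j)" by (rule sum_mono) (use dominant in auto)
  also have "\<dots> = \<bar>m j\<bar> * (real k * s j)" using j by (simp add: card_Diff_singleton)
  finally show ?thesis using j(2) by simp
qed

text \<open>If the solutions at scale \<open>N\<close> lie in a hyperplane \<open>\<Sum> m\<^sub>i L\<^sub>i = 0\<close>, the box principle
  in a box stretched in the coordinate \<open>j\<close> maximising \<open>|m\<^sub>j| s\<^sub>j\<close> yields a point of the
  hyperplane, whose \<open>j\<close>-th form is then small as well: a solution at scale \<open>Y\<close>.\<close>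

lemma full_indep_sols_if_no_small_solution:
  fixes zeta :: "nat \<Rightarrow> real" and N :: nat
  assumes k: "k \<ge> 1" and "a > 0" "b > 0" "M > 0"
    and "b \<le> 1 / M" and "1 / M \<le> real N powr (-eta)"
    and "real k * a \<le> Y" and "real k * b \<le> Y powr (-theta)"
    and count: "\<And>j. j \<le> k \<Longrightarrow>
      box_count k N ((\<lambda>i. if i = 0 then a else b)(j := if j = 0 then real N + 1 else 1 / M)) \<le> N"
    and no_small: "\<not> has_indep_sols k 1 zeta theta Y"
  shows "has_indep_sols k (k+1) zeta eta (real N)"
proof (rule ccontr)
  define s :: "nat \<Rightarrow> real" where "s i = (if i = 0 then a else b)" for i
  have s: "s i > 0" for i using \<open>a > 0\<close> \<open>b > 0\<close> by (simp add: s_def)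
  assume no_full: "\<not> ?thesis"
  obtain m where m: "\<exists>i\<le>k. m i \<noteq> 0"
    "\<And>u. \<bar>approx_form zeta u 0\<bar> \<le> real N \<Longrightarrow>
      (\<forall>i\<in>{1..k}. \<bar>approx_form zeta u i\<bar> \<le> real N powr (-eta)) \<Longrightarrow>
      (\<Sum>i\<le>k. m i * approx_form zeta u i) = 0"
    using approx_forms_hyperplane[OF no_full] by blast
  define f where "f i = \<bar>m i\<bar> * s i" for i
  have "Max (f ` {..k}) \<in> f ` {..k}" by (intro Max_in) auto
  then obtain j where j: "j \<le> k" "f j = Max (f ` {..k})" by (metis atMost_iff imageE)
  then have dominant: "f i \<le> f j" if "i \<le> k" for i using that by simp
  have "m j \<noteq> 0"
  proof -
    obtain i where "i \<le> k" "m i \<noteq> 0" using m(1) by blast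
    then have "0 < f i" using s by (simp add: f_def)
    then show ?thesis using dominant[OF \<open>i \<le> k\<close>] by (auto simp: f_def)
  qed
  define w where "w = s(j := if j = 0 then real N + 1 else 1 / M)"
  have "w i > 0" for i using s \<open>M > 0\<close> by (simp add: w_def)
  moreover have "box_count k N w \<le> N" using count[OF j(1)] by (simp add: w_def s_def[abs_def])
  ultimately obtain d where d: "d 0 \<noteq> 0" "\<bar>real_of_int (d 0)\<bar> \<le> real N"
    "\<And>i. i \<le> k \<Longrightarrow> \<bar>approx_form zeta d i\<bar> < w i"
    using pigeonhole_approx by blast
  have "\<bar>approx_form zeta d i\<bar> \<le> real N powr (-eta)" if "i \<in> {1..k}" for i
  proof -
    have "w i \<le> 1 / M" using that \<open>b \<le> 1 / M\<close> by (simp add: w_def s_def)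
    then show ?thesis using d(3)[of i] that \<open>1 / M \<le> real N powr (-eta)\<close> by force
  qed
  then have hyperplane: "(\<Sum>i\<le>k. m i * approx_form zeta d i) = 0"
    using d(2) by (intro m(2)) (simp_all add: approx_form_def)
  have "\<bar>approx_form zeta d i\<bar> \<le> real k * s i" if "i \<le> k" for i
  proof (cases "i = j")
    case True
    show ?thesis unfolding True
    proof (rule abs_le_if_dominant_term[OF hyperplane j(1) \<open>m j \<noteq> 0\<close>])
      show "\<bar>m i\<bar> * s i \<le> \<bar>m j\<bar> * s j" if "i \<le> k" for i using dominant[OF that] by (simp add: f_def)
      show "\<bar>approx_form zeta d i\<bar> \<le> s i" if "i \<le> k" "i \<noteq> j" for i
        using d(3)[OF that(1)] that(2) by (simp add: w_def)
    qed
  next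
    case False
    then have "\<bar>approx_form zeta d i\<bar> \<le> s i" using d(3)[OF that] by (simp add: w_def)
    also have "s i \<le> real k * s i" using k s[of i] by simp
    finally show ?thesis .
  qed
  then have "has_indep_sols k 1 zeta theta Y"
    using \<open>real k * a \<le> Y\<close> \<open>real k * b \<le> Y powr (-theta)\<close>
    by (intro has_indep_sols_1I[where d = d] d(1)) (force simp: s_def)+
  with no_small show False by contradiction
qed

lemma box_count_one_long_side:
  assumes j: "j \<le> k"
  shows "box_count k N ((\<lambda>i. if i = 0 then a else b)(j := W)) =
    (if j = 0 then nat \<lceil>(real N + 1) / W\<rceil> * nat \<lceil>1 / b\<rceil> ^ k
     else nat \<lceil>(real N + 1) / a\<rceil> * nat \<lceil>1 / W\<rceil> * nat \<lceil>1 / b\<rceil> ^ (k-1))"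
proof -
  define g where "g i = nat \<lceil>(if i = 0 then real N + 1 else 1) / ((\<lambda>i. if i = 0 then a else b)(j := W)) i\<rceil>" for i
  have "box_count k N ((\<lambda>i. if i = 0 then a else b)(j := W)) = g 0 * (\<Prod>i\<in>{1..k}. g i)"
  proof -
    have "{..k} = insert 0 {1..k}" by auto
    then show ?thesis unfolding box_count_def g_def by simp
  qed
  also have "\<dots> = (if j = 0 then nat \<lceil>(real N + 1) / W\<rceil> * nat \<lceil>1 / b\<rceil> ^ k
     else nat \<lceil>(real N + 1) / a\<rceil> * nat \<lceil>1 / W\<rceil> * nat \<lceil>1 / b\<rceil> ^ (k-1))"
  proof (cases "j = 0")
    case False
    then have "(\<Prod>i\<in>{1..k}. g i) = g j * (\<Prod>i\<in>{1..k}-{j}. g i)"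
      using j by (subst prod.remove[of _ j]) auto
    also have "(\<Prod>i\<in>{1..k}-{j}. g i) = nat \<lceil>1 / b\<rceil> ^ (k-1)"
      using j False by (simp add: g_def card_Diff_singleton)
    finally show ?thesis using False by (simp add: g_def)
  qed (simp add: g_def)
  finally show ?thesis .
qed

lemma box_count_transference_le:
  fixes Y B M b :: real and N :: nat
  assumes j: "j \<le> k" and k: "k \<ge> 1" and "Y > 0" "Y \<le> real N" "M \<ge> 1"
    and M: "M = Y / (8 * real k * B ^ (k-1))"
    and b: "real (nat \<lceil>1 / b\<rceil>) \<le> B" "B ^ k \<le> real N"
  shows "box_count k N ((\<lambda>i. if i = 0 then Y / real k else b)(j := if j = 0 then real N + 1 else 1 / M)) \<le> N"
proof (cases "j = 0")
  case True
  have "real (nat \<lceil>1 / b\<rceil> ^ k) \<le> B ^ k" using b(1) by (simp add: power_mono)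
  then have "nat \<lceil>1 / b\<rceil> ^ k \<le> N" using b(2) by linarith
  then show ?thesis using True box_count_one_long_side[OF j] by simp
next
  case False
  have "B ^ (k-1) \<noteq> 0"
  proof
    assume "B ^ (k-1) = 0"
    then have "M = 0" using M by simp
    with \<open>M \<ge> 1\<close> show False by simp
  qed
  define p where "p = nat \<lceil>(real N + 1) / (Y / real k)\<rceil> * nat \<lceil>1 / (1 / M)\<rceil> * nat \<lceil>1 / b\<rceil> ^ (k-1)"
  have ceil_le: "real (nat \<lceil>t\<rceil>) \<le> 2 * t" if "t \<ge> 1" for t :: real
    using that by (simp add: of_nat_nat) linarith
  have "Y \<le> (real N + 1) * real k" using \<open>Y \<le> real N\<close> k
    by (smt (verit) mult_le_cancel_left1 of_nat_0_le_iff of_nat_1 of_nat_mono)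
  then have "real (nat \<lceil>(real N + 1) / (Y / real k)\<rceil>) \<le> 2 * ((real N + 1) * real k / Y)"
    using ceil_le[of "(real N + 1) * real k / Y"] \<open>Y > 0\<close> by simp
  moreover have "real (nat \<lceil>1 / (1 / M)\<rceil>) \<le> 2 * M" using ceil_le \<open>M \<ge> 1\<close> by simp
  moreover have "real (nat \<lceil>1 / b\<rceil>) ^ (k-1) \<le> B ^ (k-1)" using b(1) by (simp add: power_mono)
  ultimately have "real p \<le> 2 * ((real N + 1) * real k / Y) * (2 * M) * B ^ (k-1)"
    unfolding p_def of_nat_mult of_nat_power
    by (intro mult_mono) (use \<open>Y > 0\<close> \<open>M \<ge> 1\<close> in auto)
  also have "\<dots> = (real N + 1) / 2" using M \<open>Y > 0\<close> \<open>B ^ (k-1) \<noteq> 0\<close> k by (simp add: field_simps)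
  finally have "real p < real (N + 1)" by simp
  then have "p \<le> N" by simp
  then show ?thesis using False box_count_one_long_side[OF j] by (simp add: p_def)
qed

text \<open>The cells of side \<open>Y\<^sup>-\<^sup>\<theta>/k\<close> along the \<open>\<zeta>\<close>-axes number at most \<open>B\<close>, so \<open>N \<approx> B\<^sup>k\<close> makes
  room for the box principle, and \<open>M\<close> is the largest stretch that the count still admits.\<close>

lemma transference_parameters:
  fixes Y theta eta :: real
  assumes k: "k \<ge> 1" and theta: "real k * theta \<ge> 1" and eta: "eta > 0" and Y: "Y \<ge> 1"
    and big: "(2 * (2 * real k) ^ k) powr eta * Y powr (real k * theta * eta)
       \<le> Y powr (1 - (real k - 1) * theta) / (8 * real k * (2 * real k) ^ (k-1))"
  obtains N :: nat and M :: real where "M > 0" "Y powr (-theta) / real k \<le> 1 / M"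
    "1 / M \<le> real N powr (-eta)" "Y \<le> real N"
    "\<And>j. j \<le> k \<Longrightarrow> box_count k N ((\<lambda>i. if i = 0 then Y / real k else Y powr (-theta) / real k)
        (j := if j = 0 then real N + 1 else 1 / M)) \<le> N"
proof -
  define Yt where "Yt = Y powr theta"
  define B where "B = real k * Yt + 1"
  define N where "N = nat \<lceil>B ^ k\<rceil>"
  define M where "M = Y / (8 * real k * B ^ (k-1))"
  have kp: "real k \<ge> 1" using k by simp
  have "theta > 0" using theta kp by (smt (verit) mult_nonneg_nonpos of_nat_0_le_iff)
  have Yp: "Y > 0" using Y by simp
  have Yt1: "Yt \<ge> 1" unfolding Yt_def using Y \<open>theta > 0\<close> by (simp add: ge_one_powr_ge_zero)
  have "real k * Yt \<ge> Yt" using kp Yt1 by simp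
  then have B: "Yt \<le> B" "real k * Yt \<le> B" "B \<le> 2 * real k * Yt" "B \<ge> 1"
    unfolding B_def using Yt1 kp by linarith+
  have "B ^ k \<ge> 1" using B(4) by simp
  then have NB: "B ^ k \<le> real N" "real N \<le> 2 * B ^ k"
    unfolding N_def using real_nat_ceiling_ge[of "B ^ k"]
    by (simp_all add: of_nat_nat) (use of_int_ceiling_le_add_one[of "B ^ k"] in linarith)
  have "Y = Y powr 1" using Yp by simp
  also have "\<dots> \<le> Y powr (theta * real k)" using theta Y by (intro powr_mono) (auto simp: mult.commute)
  also have "\<dots> = Yt ^ k" unfolding Yt_def using Yp by (simp add: powr_power mult.commute)
  also have "\<dots> \<le> B ^ k" using B Yt1 by (intro power_mono) auto
  finally have NY: "Y \<le> real N" using NB by simp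
  have Mp: "M > 0" unfolding M_def using Yp B kp by simp
  have "Y * Y powr (-theta) = Y powr (1 - theta)" using Yp by (simp add: powr_diff powr_minus divide_inverse)
  also have "\<dots> \<le> Y powr (theta * real (k-1))"
    using theta Y k by (intro powr_mono) (auto simp: of_nat_diff algebra_simps)
  also have "\<dots> = Yt ^ (k-1)" unfolding Yt_def using Yp by (simp add: powr_power mult.commute)
  also have "\<dots> \<le> B ^ (k-1)" using B Yt1 by (intro power_mono) auto
  also have "\<dots> \<le> 8 * real k * real k * B ^ (k-1)"
    using mult_mono[OF kp kp] B by (simp add: mult_le_cancel_right1)
  finally have "Y powr (-theta) / real k \<le> 1 / M"
    unfolding M_def using Yp kp B by (simp add: field_simps)
  moreover have NM: "real N powr eta \<le> M"
  proof -
    have "real N powr eta \<le> (2 * (2 * real k * Yt) ^ k) powr eta"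
      using NB B eta NY Yp by (intro powr_mono2 order_trans[OF NB(2)] mult_left_mono power_mono) auto
    also have "\<dots> = (2 * (2 * real k) ^ k) powr eta * Y powr (real k * theta * eta)"
      using Yp by (simp add: Yt_def power_mult_distrib powr_mult powr_power powr_powr algebra_simps)
    also have "\<dots> \<le> Y powr (1 - (real k - 1) * theta) / (8 * real k * (2 * real k) ^ (k-1))" by (rule big)
    also have "\<dots> = Y / (8 * real k * (2 * real k * Yt) ^ (k-1))"
      using Yp k by (simp add: Yt_def power_mult_distrib powr_power powr_diff of_nat_diff mult.commute)
    also have "\<dots> \<le> M" unfolding M_def
      using B Yp kp Yt1 by (intro divide_left_mono mult_left_mono power_mono mult_pos_pos) auto
    finally show ?thesis .
  qed
  moreover have "1 \<le> M"
    using NM NY Y eta by (smt (verit) ge_one_powr_ge_zero)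
  then have "1 / M \<le> real N powr (-eta)"
    using NM Mp NY Yp by (simp add: powr_minus divide_simps)
  moreover have "1 / (Y powr (-theta) / real k) = real k * Yt"
    unfolding Yt_def using kp Yp by (simp add: powr_minus divide_inverse)
  then have "real (nat \<lceil>1 / (Y powr (-theta) / real k)\<rceil>) \<le> B"
    unfolding B_def using Yt1 kp of_int_ceiling_le_add_one[of "real k * Yt"] by (simp add: of_nat_nat)
  then have "box_count k N ((\<lambda>i. if i = 0 then Y / real k else Y powr (-theta) / real k)
        (j := if j = 0 then real N + 1 else 1 / M)) \<le> N" if "j \<le> k" for j
    using box_count_transference_le[OF that k Yp NY \<open>1 \<le> M\<close> M_def _ NB(1)] by blast
  ultimately show thesis using that Mp NY by blast
qed

lemma frequently_at_top_iff:
  "(\<exists>\<^sub>F x in at_top. P x) \<longleftrightarrow> (\<forall>x0::'a::linorder. \<exists>x\<ge>x0. P x)"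
  unfolding frequently_def eventually_at_top_linorder by auto

lemma frequently_full_indep_sols_if_not_uniform:
  assumes k: "k \<ge> 1"
    and not_uniform: "\<And>theta. theta > 1 / real k \<Longrightarrow> \<exists>\<^sub>F Y in at_top. \<not> has_indep_sols k 1 zeta theta Y"
    and eta: "0 < eta" "eta < 1 / real k"
  shows "\<exists>\<^sub>F X in at_top. has_indep_sols k (k+1) zeta eta X"
proof -
  have kp: "real k \<ge> 1" using k by simp
  define den where "den = real k - 1 + real k * eta"
  have "real k * eta < 1" using eta kp by (simp add: field_simps)
  moreover have "real k * eta > 0" using eta kp by simp
  ultimately have "0 < den" "den < real k" unfolding den_def using kp by simp_all
  then have "1 / real k < 1 / den" by (simp add: frac_less2)
  define theta where "theta = (1 / real k + 1 / den) / 2"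
  have theta: "1 / real k < theta" "theta < 1 / den"
    unfolding theta_def using \<open>1 / real k < 1 / den\<close> by simp_all
  then have "real k * theta \<ge> 1" "theta * den < 1"
    using kp \<open>0 < den\<close> by (simp_all add: field_simps)
  define gamma where "gamma = 1 - (real k - 1) * theta - real k * theta * eta"
  have "gamma > 0" using \<open>theta * den < 1\<close> unfolding gamma_def den_def by (simp add: algebra_simps)
  define C1 where "C1 = (2 * (2 * real k) ^ k) powr eta"
  define C2 where "C2 = 8 * real k * (2 * real k) ^ (k-1)"
  have "C2 > 0" unfolding C2_def using kp by simp
  have "\<forall>\<^sub>F Y in at_top. (Y::real) \<ge> 1" by (rule eventually_ge_at_top)
  moreover have "\<forall>\<^sub>F Y in at_top. Y powr gamma \<ge> C1 * C2" using \<open>gamma > 0\<close> by real_asymp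
  ultimately have "\<exists>\<^sub>F Y in at_top. \<not> has_indep_sols k 1 zeta theta Y \<and> Y \<ge> 1 \<and> Y powr gamma \<ge> C1 * C2"
    using frequently_eventually_frequently[OF not_uniform[OF theta(1)] eventually_conj] by simp
  then show ?thesis unfolding frequently_at_top_iff
  proof (elim all_forward)
    fix X0 :: real
    assume "\<exists>Y\<ge>X0. \<not> has_indep_sols k 1 zeta theta Y \<and> Y \<ge> 1 \<and> Y powr gamma \<ge> C1 * C2"
    then obtain Y where Y: "Y \<ge> X0" "\<not> has_indep_sols k 1 zeta theta Y" "Y \<ge> 1" "Y powr gamma \<ge> C1 * C2"
      by blast
    have "Y powr (1 - (real k - 1) * theta) = Y powr (real k * theta * eta) * Y powr gamma"
      unfolding gamma_def by (simp add: powr_add[symmetric])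
    also have "\<dots> \<ge> Y powr (real k * theta * eta) * (C1 * C2)" using Y(4) by (simp add: mult_left_mono)
    finally have "C1 * Y powr (real k * theta * eta) \<le> Y powr (1 - (real k - 1) * theta) / C2"
      using \<open>C2 > 0\<close> by (simp add: field_simps)
    then obtain N M where NM: "M > 0" "Y powr (-theta) / real k \<le> 1 / M"
      "1 / M \<le> real N powr (-eta)" "Y \<le> real N"
      "\<And>j. j \<le> k \<Longrightarrow> box_count k N ((\<lambda>i. if i = 0 then Y / real k else Y powr (-theta) / real k)
        (j := if j = 0 then real N + 1 else 1 / M)) \<le> N"
      using transference_parameters[OF k \<open>real k * theta \<ge> 1\<close> eta(1) Y(3)] unfolding C1_def C2_def by blast
    have "has_indep_sols k (k+1) zeta eta (real N)"
      by (rule full_indep_sols_if_no_small_solution[OF k _ _ NM(1,2,3) _ _ NM(5) Y(2)])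
        (use kp Y(3) in auto)
    then show "\<exists>X\<ge>X0. has_indep_sols k (k+1) zeta eta X" using Y(1) NM(4) by (intro exI[of _ "real N"]) auto
  qed
qed

lemma lambda_exp_eq_Sup_frequently:
  "lambda_exp k j zeta = Sup {ereal eta | eta. \<exists>\<^sub>F X in at_top. has_indep_sols k j zeta eta X}"
  unfolding lambda_exp_def frequently_at_top_iff ..

lemma hat_lambda_exp_eq_Sup_eventually:
  "hat_lambda_exp k j zeta = Sup {ereal eta | eta. \<forall>\<^sub>F X in at_top. has_indep_sols k j zeta eta X}"
  unfolding hat_lambda_exp_def eventually_at_top_linorder ..

lemma ereal_le_Sup_if_dense_below:
  assumes "c > 0" and P: "\<And>r. 0 < r \<Longrightarrow> r < c \<Longrightarrow> P r"
  shows "ereal c \<le> Sup {ereal r | r. P r}"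
proof (rule dense_le_bounded[of "ereal 0"])
  fix w assume w: "ereal 0 < w" "w < ereal c"
  then obtain r where "w = ereal r" by (cases w) auto
  with w P show "w \<le> Sup {ereal r | r. P r}" by (auto intro: Sup_upper)
qed (use \<open>c > 0\<close> in simp)

lemma Sup_ereal_le_if_bounded:
  assumes "\<And>r. P r \<Longrightarrow> r \<le> c"
  shows "Sup {ereal r | r. P r} \<le> ereal c"
  using assms by (auto intro: Sup_least)

lemma hat_lambda_exp_1_ge:
  assumes "k \<ge> 1"
  shows "ereal (1 / real k) \<le> hat_lambda_exp k 1 zeta"
  unfolding hat_lambda_exp_eq_Sup_eventually
  using assms by (intro ereal_le_Sup_if_dense_below dirichlet_eventually) auto

lemma lambda_exp_last_le:
  assumes "k \<ge> 1"
  shows "lambda_exp k (k+1) zeta \<le> ereal (1 / real k)"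
  unfolding lambda_exp_eq_Sup_frequently
  using frequently_full_indep_sols_imp_le[OF assms] by (intro Sup_ereal_le_if_bounded)

lemma lambda_exp_antimono: "lambda_exp k (j+1) zeta \<le> lambda_exp k j zeta"
proof -
  have "has_indep_sols k j zeta eta X" if "has_indep_sols k (j+1) zeta eta X" for eta X
    using that lin_indep_int_mono[of k "j+1" _ j] unfolding has_indep_sols_def by fastforce
  then show ?thesis unfolding lambda_exp_def by (intro Sup_subset_mono) blast
qed

lemma lambda_exp_last_ge_if_hat_lambda_exp_1_le:
  assumes k: "k \<ge> 1" and hat: "hat_lambda_exp k 1 zeta \<le> ereal (1 / real k)"
  shows "ereal (1 / real k) \<le> lambda_exp k (k+1) zeta"
proof -
  have "\<exists>\<^sub>F Y in at_top. \<not> has_indep_sols k 1 zeta theta Y" if "theta > 1 / real k" for theta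
  proof (rule ccontr)
    assume "\<not> ?thesis"
    then have "ereal theta \<le> hat_lambda_exp k 1 zeta"
      unfolding hat_lambda_exp_eq_Sup_eventually not_frequently by (auto intro: Sup_upper)
    then have "ereal theta \<le> ereal (1 / real k)" using hat by (rule order_trans)
    with that show False by simp
  qed
  then show ?thesis
    unfolding lambda_exp_eq_Sup_frequently using k
    by (intro ereal_le_Sup_if_dense_below frequently_full_indep_sols_if_not_uniform) auto
qed

lemma hat_lambda_exp_1_le_if_lambda_exp_last_ge:
  assumes k: "k \<ge> 1" and last: "ereal (1 / real k) \<le> lambda_exp k (k+1) zeta"
  shows "hat_lambda_exp k 1 zeta \<le> ereal (1 / real k)"
proof (rule ccontr)
  assume "\<not> ?thesis"
  then obtain theta where theta: "theta > 1 / real k" "\<forall>\<^sub>F Y in at_top. has_indep_sols k 1 zeta theta Y"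
    unfolding hat_lambda_exp_eq_Sup_eventually not_le less_Sup_iff by auto
  have "real k * theta > 1" using theta(1) k by (simp add: field_simps)
  then have "1 / (real k * theta + real k - 1) < 1 / real k" using k by (intro frac_less2) auto
  moreover have "lambda_exp k (k+1) zeta \<le> ereal (1 / (real k * theta + real k - 1))"
    unfolding lambda_exp_eq_Sup_frequently
    using frequently_full_indep_sols_imp_le_if_uniform[OF k theta] by (intro Sup_ereal_le_if_bounded)
  then have "ereal (1 / real k) \<le> ereal (1 / (real k * theta + real k - 1))"
    using last by (rule order_trans[rotated])
  ultimately show False by simp
qed

theorem lemma9:
  fixes k :: nat and zeta :: "nat \<Rightarrow> real"
  assumes "k \<ge> 1"
  shows "hat_lambda_exp k 1 zeta = ereal (1 / real k) \<longleftrightarrow>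
           ((\<forall>j\<in>{2..k}. lambda_exp k j zeta \<ge> lambda_exp k (j + 1) zeta) \<and>
            lambda_exp k (k + 1) zeta = ereal (1 / real k))"
proof
  assume "hat_lambda_exp k 1 zeta = ereal (1 / real k)"
  then have "lambda_exp k (k + 1) zeta = ereal (1 / real k)"
    using lambda_exp_last_ge_if_hat_lambda_exp_1_le[OF assms] lambda_exp_last_le[OF assms]
    by (simp add: antisym)
  then show "(\<forall>j\<in>{2..k}. lambda_exp k j zeta \<ge> lambda_exp k (j + 1) zeta) \<and>
      lambda_exp k (k + 1) zeta = ereal (1 / real k)"
    using lambda_exp_antimono by blast
next
  assume "(\<forall>j\<in>{2..k}. lambda_exp k j zeta \<ge> lambda_exp k (j + 1) zeta) \<and>
      lambda_exp k (k + 1) zeta = ereal (1 / real k)"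
  then show "hat_lambda_exp k 1 zeta = ereal (1 / real k)"
    using hat_lambda_exp_1_le_if_lambda_exp_last_ge[OF assms] hat_lambda_exp_1_ge[OF assms]
    by (simp add: antisym)
qed

end
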